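(* Let $k,l,N$ be positive integers and let $\mu_0,\dots,\mu_N$ be proper distributions on $\mathbb{T}^2$. Then the system $$-\partial_1^k\varphi_1=\mu_0,\qquad \partial_2^l\varphi_j-\partial_1^k\varphi_{j+1}=\mu_j\ (j=1,\dots,N-1),\qquad \partial_2^l\varphi_N=\mu_N$$ admits a solution in proper distributions $\varphi_1,\dots,\varphi_N$ if and only if $$\sum_{j=0}^N\partial_1^{jk}\partial_2^{(N-j)l}\mu_j=0.$$ Moreover, if this condition holds, the solution in proper distributions is unique.
   Context: The torus is parametrised by $t\mapsto e^{2\pi it}$; $\partial_1,\partial_2$ are derivatives in the parameters; Fourier coefficients are $\hat f(m,n)$, $(m,n)\in\mathbb{Z}^2$. A distribution $f$ on $\mathbb{T}^2$ is proper if $\hat f(s,t)=0$ whenever $s=0$ or $t=0$. *)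

theory Defs
  imports "HOL-Analysis.Analysis"
begin

text \<open>A distribution on the torus T^2 is represented by its family of Fourier
coefficients (m,n) in Z^2, which are exactly the families of at most polynomial growth.\<close>

type_synonym tdist = "int \<times> int \<Rightarrow> complex"

definition is_distr :: "tdist \<Rightarrow> bool" where
  "is_distr f \<longleftrightarrow> (\<exists>C::real. \<exists>d::nat. \<forall>m n.
      norm (f (m, n)) \<le> C * (1 + \<bar>real_of_int m\<bar> + \<bar>real_of_int n\<bar>) ^ d)"

definition proper :: "tdist \<Rightarrow> bool" where
  "proper f \<longleftrightarrow> (\<forall>s t. s = 0 \<or> t = 0 \<longrightarrow> f (s, t) = 0)"

text \<open>k-th partial derivatives in the first / second parameter (t \<mapsto> e^(2 pi i t)),
acting on Fourier coefficients.\<close>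

definition d1 :: "nat \<Rightarrow> tdist \<Rightarrow> tdist" where
  "d1 k f = (\<lambda>(m, n). (2 * complex_of_real pi * \<i> * of_int m) ^ k * f (m, n))"

definition d2 :: "nat \<Rightarrow> tdist \<Rightarrow> tdist" where
  "d2 l f = (\<lambda>(m, n). (2 * complex_of_real pi * \<i> * of_int n) ^ l * f (m, n))"

definition solves_system :: "nat \<Rightarrow> nat \<Rightarrow> nat \<Rightarrow> (nat \<Rightarrow> tdist) \<Rightarrow> (nat \<Rightarrow> tdist) \<Rightarrow> bool" where
  "solves_system k l N \<mu> \<phi> \<longleftrightarrow>
     (\<forall>x. - d1 k (\<phi> 1) x = \<mu> 0 x) \<and>
     (\<forall>j\<in>{1..N-1}. \<forall>x. d2 l (\<phi> j) x - d1 k (\<phi> (Suc j)) x = \<mu> j x) \<and>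
     d2 l (\<phi> N) = \<mu> N"

definition compat :: "nat \<Rightarrow> nat \<Rightarrow> nat \<Rightarrow> (nat \<Rightarrow> tdist) \<Rightarrow> bool" where
  "compat k l N \<mu> \<longleftrightarrow>
     (\<forall>x. (\<Sum>j=0..N. d1 (j * k) (d2 ((N - j) * l) (\<mu> j)) x) = 0)"

end

theory Submission imports Defs begin

text \<open>At each frequency (m,n) the system decouples into the scalar chain
  -a f_1 = g_0, b f_j - a f_(j+1) = g_j, b f_N = g_N, where a and b are the symbols of
  \<partial>_1^k and \<partial>_2^l. Multiplying the j-th equation by a^j b^(N-j) and summing telescopes to
  \<Sum> a^j b^(N-j) g_j = a^N (g_N - b f_N), so the compatibility condition is necessary.
  Conversely, for a \<noteq> 0 the first N equations determine f by forward recursion, and the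
  last one is then equivalent to compatibility; the recursion only divides by symbols of norm
  \<ge> 1, so it preserves polynomial growth. Properness makes the frequencies with a = 0 trivial.\<close>

text \<open>The first N equations of the chain; the last one, b f_N = g_N, is kept apart since it is
  the one that compatibility accounts for.\<close>

definition chain_eqs :: "'a::comm_ring_1 \<Rightarrow> 'a \<Rightarrow> nat \<Rightarrow> (nat \<Rightarrow> 'a) \<Rightarrow> (nat \<Rightarrow> 'a) \<Rightarrow> bool" where
  "chain_eqs a b N g f \<longleftrightarrow>
     - (a * f 1) = g 0 \<and> (\<forall>j\<in>{1..N-1}. b * f j - a * f (Suc j) = g j)"

lemma chain_eqs_closed_form:
  fixes a b :: "'a::comm_ring_1"
  assumes eqs: "chain_eqs a b N g f" and "1 \<le> j" "j \<le> N"
  shows "a ^ j * f j = - (\<Sum>i<j. a ^ i * b ^ (j - 1 - i) * g i)"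
  using \<open>1 \<le> j\<close> \<open>j \<le> N\<close>
proof (induction j rule: dec_induct)
  case base
  then show ?case using eqs unfolding chain_eqs_def by (simp add: minus_equation_iff)
next
  case (step j)
  have "b * f j - a * f (Suc j) = g j"
    using eqs step.hyps step.prems unfolding chain_eqs_def by auto
  then have "a * f (Suc j) = b * f j - g j"
    by (simp add: algebra_simps)
  have "a ^ Suc j * f (Suc j) = a ^ j * (a * f (Suc j))"
    by (simp add: algebra_simps)
  also have "\<dots> = b * (a ^ j * f j) - a ^ j * g j"
    unfolding \<open>a * f (Suc j) = b * f j - g j\<close> by (simp add: algebra_simps)
  also have "\<dots> = - (\<Sum>i<j. a ^ i * (b * b ^ (j - 1 - i)) * g i) - a ^ j * g j"
    using step by (simp add: sum_distrib_left algebra_simps)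
  also have "(\<Sum>i<j. a ^ i * (b * b ^ (j - 1 - i)) * g i) = (\<Sum>i<j. a ^ i * b ^ (j - i) * g i)"
    by (intro sum.cong refl) (simp flip: power_Suc add: Suc_diff_Suc)
  finally have "a ^ Suc j * f (Suc j) = - (\<Sum>i<j. a ^ i * b ^ (j - i) * g i) - a ^ j * g j" .
  then show ?case by simp
qed

lemma chain_eqs_telescope:
  fixes a b :: "'a::comm_ring_1"
  assumes eqs: "chain_eqs a b N g f" and "N > 0"
  shows "(\<Sum>j=0..N. a ^ j * (b ^ (N - j) * g j)) = a ^ N * (g N - b * f N)"
proof -
  have "b * (\<Sum>i<N. a ^ i * b ^ (N - 1 - i) * g i) = (\<Sum>i<N. a ^ i * b ^ (N - i) * g i)"
    unfolding sum_distrib_left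
  proof (intro sum.cong refl)
    fix i assume "i \<in> {..<N}"
    then have "N - i = Suc (N - 1 - i)" by auto
    then show "b * (a ^ i * b ^ (N - 1 - i) * g i) = a ^ i * b ^ (N - i) * g i"
      by (simp add: algebra_simps)
  qed
  moreover have "(\<Sum>j=0..N. a ^ j * (b ^ (N - j) * g j))
      = (\<Sum>i<N. a ^ i * b ^ (N - i) * g i) + a ^ N * g N"
    using \<open>N > 0\<close>
    by (cases N) (simp_all add: atLeast0AtMost sum.atMost_Suc lessThan_Suc_atMost[symmetric] mult.assoc)
  ultimately show ?thesis
    using chain_eqs_closed_form[OF eqs, of N] \<open>N > 0\<close> by (simp add: algebra_simps)
qed

lemma chain_eqs_unique:
  fixes a b :: "'a::idom"
  assumes "chain_eqs a b N g f" "chain_eqs a b N g f'" "a \<noteq> 0" "1 \<le> j" "j \<le> N"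
  shows "f j = f' j"
  using chain_eqs_closed_form[OF assms(1,4,5)] chain_eqs_closed_form[OF assms(2,4,5)] \<open>a \<noteq> 0\<close>
  by (metis mult_left_cancel power_not_zero)

primrec chain_solve :: "'a::field \<Rightarrow> 'a \<Rightarrow> (nat \<Rightarrow> 'a) \<Rightarrow> nat \<Rightarrow> 'a" where
  "chain_solve a b g 0 = 0"
| "chain_solve a b g (Suc j) = (b * chain_solve a b g j - g j) / a"

lemma chain_solve_eqs:
  fixes a b :: "'a::field"
  assumes "a \<noteq> 0"
  shows "chain_eqs a b N g (chain_solve a b g)"
  using assms unfolding chain_eqs_def by simp

lemma chain_solve_eq_0:
  assumes "\<forall>i<j. g i = 0"
  shows "chain_solve a b g j = 0"
  using assms by (induction j) auto

definition symbol :: "nat \<Rightarrow> int \<Rightarrow> complex" where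
  "symbol k m = (2 * complex_of_real pi * \<i> * of_int m) ^ k"

lemma symbol_mult: "symbol (j * k) m = symbol k m ^ j"
  unfolding symbol_def by (metis mult.commute power_mult)

lemma d1_apply: "d1 k f (m, n) = symbol k m * f (m, n)"
  by (simp add: d1_def symbol_def)

lemma d2_apply: "d2 l f (m, n) = symbol l n * f (m, n)"
  by (simp add: d2_def symbol_def)

lemma norm_symbol: "norm (symbol k m) = (2 * pi * \<bar>real_of_int m\<bar>) ^ k"
  by (simp add: symbol_def norm_mult norm_power)

lemma symbol_nonzero: "m \<noteq> 0 \<Longrightarrow> symbol k m \<noteq> 0"
  by (simp add: symbol_def)

lemma symbol_eq_0_or_norm_ge_1: "symbol k m = 0 \<or> 1 \<le> norm (symbol k m)"
proof (cases "m = 0")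
  case False
  then have "1 \<le> \<bar>real_of_int m\<bar>"
    by linarith
  moreover have "1 \<le> 2 * pi"
    using pi_gt3 by simp
  ultimately have "1 \<le> 2 * pi * \<bar>real_of_int m\<bar>"
    using mult_mono[of 1 "2 * pi" 1 "\<bar>real_of_int m\<bar>"] by simp
  then show ?thesis
    unfolding norm_symbol by (simp add: one_le_power)
qed (cases k; simp add: symbol_def)

lemma norm_divide_symbol_le: "norm (x / symbol k m) \<le> norm x"
proof (cases "symbol k m = 0")
  case False
  then have "1 \<le> norm (symbol k m)"
    using symbol_eq_0_or_norm_ge_1 by blast
  then have "norm x / norm (symbol k m) \<le> norm x / 1"
    by (intro divide_left_mono) auto
  then show ?thesis
    by (simp add: norm_divide)
qed simp

lemma solves_system_iff_chain_eqs:
  "solves_system k l N \<mu> \<phi> \<longleftrightarrow>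
     (\<forall>m n. chain_eqs (symbol k m) (symbol l n) N (\<lambda>j. \<mu> j (m, n)) (\<lambda>j. \<phi> j (m, n))
        \<and> symbol l n * \<phi> N (m, n) = \<mu> N (m, n))"
  unfolding solves_system_def chain_eqs_def
  by (auto simp: fun_eq_iff d1_apply d2_apply)

lemma compat_iff_sums:
  "compat k l N \<mu> \<longleftrightarrow>
     (\<forall>m n. (\<Sum>j=0..N. symbol k m ^ j * (symbol l n ^ (N - j) * \<mu> j (m, n))) = 0)"
  unfolding compat_def by (simp add: d1_apply d2_apply symbol_mult)

lemma is_distr_norm_le:
  assumes "is_distr f" "\<And>x. norm (h x) \<le> norm (f x)"
  shows "is_distr h"
  using assms unfolding is_distr_def by (meson order_trans)

lemma is_distr_diff:
  assumes "is_distr f" "is_distr g"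
  shows "is_distr (\<lambda>x. f x - g x)"
proof -
  obtain C d where f: "\<forall>m n. norm (f (m, n)) \<le> C * (1 + \<bar>real_of_int m\<bar> + \<bar>real_of_int n\<bar>) ^ d"
    using assms(1) unfolding is_distr_def by blast
  obtain D e where g: "\<forall>m n. norm (g (m, n)) \<le> D * (1 + \<bar>real_of_int m\<bar> + \<bar>real_of_int n\<bar>) ^ e"
    using assms(2) unfolding is_distr_def by blast
  show ?thesis unfolding is_distr_def
  proof (intro exI allI)
    fix m n
    define r where "r = 1 + \<bar>real_of_int m\<bar> + \<bar>real_of_int n\<bar>"
    have "1 \<le> r" unfolding r_def by simp
    then have "C * r ^ d \<le> \<bar>C\<bar> * r ^ (d + e)" "D * r ^ e \<le> \<bar>D\<bar> * r ^ (d + e)"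
      by (auto intro!: mult_mono power_increasing)
    moreover have "norm (f (m, n) - g (m, n)) \<le> C * r ^ d + D * r ^ e"
      using f g norm_triangle_ineq4[of "f (m, n)" "g (m, n)"] unfolding r_def by (smt (verit))
    ultimately show "norm (f (m, n) - g (m, n)) \<le> (\<bar>C\<bar> + \<bar>D\<bar>) * r ^ (d + e)"
      by (simp add: algebra_simps)
  qed
qed

lemma is_distr_d2:
  assumes "is_distr f"
  shows "is_distr (d2 l f)"
proof -
  obtain C d where f: "\<forall>m n. norm (f (m, n)) \<le> C * (1 + \<bar>real_of_int m\<bar> + \<bar>real_of_int n\<bar>) ^ d"
    using assms unfolding is_distr_def by blast
  show ?thesis unfolding is_distr_def
  proof (intro exI allI)
    fix m n
    define r where "r = 1 + \<bar>real_of_int m\<bar> + \<bar>real_of_int n\<bar>"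
    have "(2 * pi * \<bar>real_of_int n\<bar>) ^ l \<le> (2 * pi * r) ^ l"
      unfolding r_def by (intro power_mono) auto
    then have "norm (d2 l f (m, n)) \<le> (2 * pi * r) ^ l * (C * r ^ d)"
      unfolding d2_apply norm_mult norm_symbol using f r_def
      by (intro mult_mono) auto
    then show "norm (d2 l f (m, n)) \<le> ((2 * pi) ^ l * C) * r ^ (l + d)"
      by (simp add: power_mult_distrib power_add algebra_simps)
  qed
qed

lemma solves_system_imp_compat:
  assumes "solves_system k l N \<mu> \<phi>" "N > 0"
  shows "compat k l N \<mu>"
  unfolding compat_iff_sums
proof (intro allI)
  fix m n
  have eqs: "chain_eqs (symbol k m) (symbol l n) N (\<lambda>j. \<mu> j (m, n)) (\<lambda>j. \<phi> j (m, n))"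
    and last: "symbol l n * \<phi> N (m, n) = \<mu> N (m, n)"
    using assms(1) unfolding solves_system_iff_chain_eqs by auto
  show "(\<Sum>j=0..N. symbol k m ^ j * (symbol l n ^ (N - j) * \<mu> j (m, n))) = 0"
    using chain_eqs_telescope[OF eqs \<open>N > 0\<close>] last by simp
qed

lemma proper_solutions_unique:
  assumes "solves_system k l N \<mu> \<phi>" "solves_system k l N \<mu> \<psi>"
    and "proper (\<phi> j)" "proper (\<psi> j)" "j \<in> {1..N}"
  shows "\<phi> j = \<psi> j"
proof (rule ext, clarify)
  fix m n
  show "\<phi> j (m, n) = \<psi> j (m, n)"
  proof (cases "m = 0")
    case True
    then show ?thesis using assms(3,4) unfolding proper_def by simp
  next
    case False
    have "chain_eqs (symbol k m) (symbol l n) N (\<lambda>j. \<mu> j (m, n)) (\<lambda>j. \<phi> j (m, n))"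
      and "chain_eqs (symbol k m) (symbol l n) N (\<lambda>j. \<mu> j (m, n)) (\<lambda>j. \<psi> j (m, n))"
      using assms(1,2) unfolding solves_system_iff_chain_eqs by auto
    from chain_eqs_unique[OF this symbol_nonzero[OF False]] show ?thesis
      using assms(5) by simp
  qed
qed

lemma compat_imp_proper_solution:
  assumes "compat k l N \<mu>" "N > 0" "\<forall>j\<in>{0..N}. is_distr (\<mu> j) \<and> proper (\<mu> j)"
  shows "\<exists>\<phi>. (\<forall>j\<in>{1..N}. is_distr (\<phi> j) \<and> proper (\<phi> j)) \<and> solves_system k l N \<mu> \<phi>"
proof -
  define \<phi> where "\<phi> j = (\<lambda>(m, n). chain_solve (symbol k m) (symbol l n) (\<lambda>i. \<mu> i (m, n)) j)" for j
  have \<mu>_0: "\<mu> j (m, n) = 0" if "m = 0 \<or> n = 0" "j \<le> N" for j m n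
    using assms(3) that unfolding proper_def by auto
  \<comment> \<open>Where a = 0 the recursion divides by zero, but there all data vanish, so it yields 0.\<close>
  have \<phi>_0: "\<phi> j (m, n) = 0" if "m = 0 \<or> n = 0" "j \<le> N" for j m n
    unfolding \<phi>_def using \<mu>_0 that by (simp add: chain_solve_eq_0)
  have distr: "is_distr (\<phi> j)" if "j \<le> N" for j
    using that
  proof (induction j)
    case 0
    then show ?case unfolding \<phi>_def is_distr_def by (auto intro!: exI[of _ 0])
  next
    case (Suc j)
    then have "is_distr (\<phi> j)" "is_distr (\<mu> j)"
      using assms(3) by auto
    then have "is_distr (\<lambda>x. d2 l (\<phi> j) x - \<mu> j x)"
      by (intro is_distr_diff is_distr_d2)
    moreover have "\<phi> (Suc j) (m, n) = (d2 l (\<phi> j) (m, n) - \<mu> j (m, n)) / symbol k m" for m n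
      unfolding \<phi>_def d2_apply by simp
    then have "norm (\<phi> (Suc j) x) \<le> norm (d2 l (\<phi> j) x - \<mu> j x)" for x
      using norm_divide_symbol_le by (metis surj_pair)
    ultimately show ?case
      by (rule is_distr_norm_le)
  qed
  have "solves_system k l N \<mu> \<phi>"
    unfolding solves_system_iff_chain_eqs
  proof (intro allI)
    fix m n
    let ?a = "symbol k m" and ?b = "symbol l n"
    show "chain_eqs ?a ?b N (\<lambda>j. \<mu> j (m, n)) (\<lambda>j. \<phi> j (m, n)) \<and> ?b * \<phi> N (m, n) = \<mu> N (m, n)"
    proof (cases "m = 0")
      case True
      then show ?thesis
        using \<mu>_0 \<phi>_0 \<open>N > 0\<close> unfolding chain_eqs_def by auto
    next
      case False
      have eqs: "chain_eqs ?a ?b N (\<lambda>j. \<mu> j (m, n)) (\<lambda>j. \<phi> j (m, n))"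
        unfolding \<phi>_def using chain_solve_eqs[OF symbol_nonzero[OF False]] by simp
      have "?a ^ N * (\<mu> N (m, n) - ?b * \<phi> N (m, n)) = 0"
        using chain_eqs_telescope[OF eqs \<open>N > 0\<close>] assms(1) unfolding compat_iff_sums by simp
      with eqs symbol_nonzero[OF False] show ?thesis by simp
    qed
  qed
  moreover have "proper (\<phi> j)" if "j \<le> N" for j
    using \<phi>_0 that unfolding proper_def by blast
  ultimately show ?thesis
    using distr by (auto intro!: exI[of _ \<phi>])
qed

theorem lemma5:
  fixes k l N :: nat and \<mu> :: "nat \<Rightarrow> tdist"
  assumes "k > 0" and "l > 0" and "N > 0"
    and "\<forall>j\<in>{0..N}. is_distr (\<mu> j) \<and> proper (\<mu> j)"
  shows "((\<exists>\<phi>. (\<forall>j\<in>{1..N}. is_distr (\<phi> j) \<and> proper (\<phi> j)) \<and> solves_system k l N \<mu> \<phi>)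
          \<longleftrightarrow> compat k l N \<mu>)
       \<and> (compat k l N \<mu> \<longrightarrow>
          (\<forall>\<phi> \<psi>. (\<forall>j\<in>{1..N}. is_distr (\<phi> j) \<and> proper (\<phi> j)) \<and> solves_system k l N \<mu> \<phi>
               \<and> (\<forall>j\<in>{1..N}. is_distr (\<psi> j) \<and> proper (\<psi> j)) \<and> solves_system k l N \<mu> \<psi>
               \<longrightarrow> (\<forall>j\<in>{1..N}. \<phi> j = \<psi> j)))"
proof (intro conjI impI allI iffI)
  assume "\<exists>\<phi>. (\<forall>j\<in>{1..N}. is_distr (\<phi> j) \<and> proper (\<phi> j)) \<and> solves_system k l N \<mu> \<phi>"
  then obtain \<phi> where "solves_system k l N \<mu> \<phi>"
    by blast
  then show "compat k l N \<mu>"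
    using \<open>N > 0\<close> by (rule solves_system_imp_compat)
next
  assume "compat k l N \<mu>"
  then show "\<exists>\<phi>. (\<forall>j\<in>{1..N}. is_distr (\<phi> j) \<and> proper (\<phi> j)) \<and> solves_system k l N \<mu> \<phi>"
    using \<open>N > 0\<close> assms(4) by (rule compat_imp_proper_solution)
next
  fix \<phi> \<psi>
  assume solutions: "(\<forall>j\<in>{1..N}. is_distr (\<phi> j) \<and> proper (\<phi> j)) \<and> solves_system k l N \<mu> \<phi>
    \<and> (\<forall>j\<in>{1..N}. is_distr (\<psi> j) \<and> proper (\<psi> j)) \<and> solves_system k l N \<mu> \<psi>"
  show "\<forall>j\<in>{1..N}. \<phi> j = \<psi> j"
  proof
    fix j assume "j \<in> {1..N}"
    with solutions show "\<phi> j = \<psi> j"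
      by (intro proper_solutions_unique[of k l N \<mu>]) auto
  qed
qed

end
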